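(* Let $B \in \mathbb{R}^{n \times m}$, $c \in \mathbb{R}^m_>$, and let $C = C_1 \times \cdots \times C_\ell \subseteq \mathbb{R}^m_>$ be a nonempty cone with cones $C_i \subseteq \mathbb{R}^{m_i}_>$, $m_1+\cdots+m_\ell=m$. With $P$, $L$, $M$, $I$, $d$ as in the context, let $M^*$ be any generalized inverse of $M$ ($MM^*M=M$) and $E = I M^*$. If $d = 0$, then \[ Z_c := \{x\in\mathbb{R}^n_> \mid (c\circ x^B)\in C\} = \{ (y\circ c^{-1})^E \mid y \in P\} \circ e^{L^\perp}; \] in particular, $Z_c \neq \emptyset$ for every $c \in \mathbb{R}^m_>$. Moreover, $Z_c$ consists of exactly one point if and only if $\dim P = 0$ and $\dim L^\perp = 0$.
   Context: Notation: for $x\in\mathbb{R}^n_>$, $y\in\mathbb{R}^n$, $x^y=\prod_i x_i^{y_i}$; for $Y=(y^1,\ldots,y^m)$, $(x^Y)_j=x^{y^j}$; $\circ$ is the componentwise product, $c^{-1}$ componentwise inverse, $S\circ e^{V}=\{s\circ e^v\mid s\in S, v\in V\}$. A cone is a set closed under positive scaling. The partition splits indices into $\ell$ consecutive classes, $B=(B_1\ \cdots\ B_\ell)$. $\Delta=\Delta_{m_1-1}\times\cdots\times\Delta_{m_\ell-1}$ with $\Delta_{m_i-1}=\{y\in\mathbb{R}^{m_i}_{\ge}\mid\sum_j y_j=1\}$; $P=C\cap\Delta$ (its dimension is that of its affine hull). $I_k=\begin{pmatrix}\mathrm{id}_{k-1}\\-1_{k-1}^{\mathsf T}\end{pmatrix}$,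 $I=\mathrm{diag}(I_{m_1},\ldots,I_{m_\ell})\in\mathbb{R}^{m\times(m-\ell)}$, $M=BI$, $L=\operatorname{im}M$, $d=\dim\ker M$. *)

theory Defs
  imports Complex_Main "Jordan_Normal_Form.Matrix_Kernel"
begin

(* The partition of the m indices into l consecutive classes is given by the list ms
   of class sizes [m_1,...,m_l]; m = sum_list ms, l = length ms. *)

definition pos_vecs :: "nat \<Rightarrow> real vec set" where
  "pos_vecs k = {x \<in> carrier_vec k. \<forall>i<k. x $ i > 0}"

definition is_cone :: "real vec set \<Rightarrow> bool" where
  "is_cone S \<longleftrightarrow> (\<forall>x\<in>S. \<forall>t::real. t > 0 \<longrightarrow> t \<cdot>\<^sub>v x \<in> S)"

definition had :: "real vec \<Rightarrow> real vec \<Rightarrow> real vec" where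
  "had x y = vec (dim_vec x) (\<lambda>i. x $ i * y $ i)"

definition vinv :: "real vec \<Rightarrow> real vec" where
  "vinv c = map_vec inverse c"

definition vexp :: "real vec \<Rightarrow> real vec" where
  "vexp v = map_vec exp v"

definition vpow :: "real vec \<Rightarrow> real mat \<Rightarrow> real vec" where
  "vpow x Y = vec (dim_col Y) (\<lambda>j. \<Prod>i<dim_vec x. x $ i powr (Y $$ (i, j)))"

definition offset :: "nat list \<Rightarrow> nat \<Rightarrow> nat" where
  "offset ms i = sum_list (take i ms)"

definition block :: "nat list \<Rightarrow> real vec \<Rightarrow> nat \<Rightarrow> real vec" where
  "block ms y i = vec (ms ! i) (\<lambda>j. y $ (offset ms i + j))"

definition prod_set :: "nat list \<Rightarrow> (nat \<Rightarrow> real vec set) \<Rightarrow> real vec set" where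
  "prod_set ms Cs = {y \<in> carrier_vec (sum_list ms). \<forall>i<length ms. block ms y i \<in> Cs i}"

definition simplex :: "nat \<Rightarrow> real vec set" where
  "simplex k = {y \<in> carrier_vec k. (\<forall>j<k. y $ j \<ge> 0) \<and> (\<Sum>j<k. y $ j) = 1}"

definition Delta :: "nat list \<Rightarrow> real vec set" where
  "Delta ms = prod_set ms (\<lambda>i. simplex (ms ! i))"

definition Pset :: "nat list \<Rightarrow> (nat \<Rightarrow> real vec set) \<Rightarrow> real vec set" where
  "Pset ms Cs = prod_set ms Cs \<inter> Delta ms"

definition Ik :: "nat \<Rightarrow> real mat" where
  "Ik k = mat k (k - 1) (\<lambda>(i, j). if i = k - 1 then -1 else if i = j then 1 else 0)"

definition Imat :: "nat list \<Rightarrow> real mat" where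
  "Imat ms = diag_block_mat (map Ik ms)"

definition Mmat :: "real mat \<Rightarrow> nat list \<Rightarrow> real mat" where
  "Mmat B ms = B * Imat ms"

definition Lspace :: "real mat \<Rightarrow> nat list \<Rightarrow> real vec set" where
  "Lspace B ms = {Mmat B ms *\<^sub>v z | z. z \<in> carrier_vec (sum_list ms - length ms)}"

definition orth_compl :: "nat \<Rightarrow> real vec set \<Rightarrow> real vec set" where
  "orth_compl n W = {v \<in> carrier_vec n. \<forall>w\<in>W. v \<bullet> w = 0}"

definition subspace_dim :: "nat \<Rightarrow> real vec set \<Rightarrow> nat" where
  "subspace_dim n W = vectorspace.dim class_ring ((module_vec TYPE(real) n)\<lparr>carrier := W\<rparr>)"

definition aff_hull_vec :: "nat \<Rightarrow> real vec set \<Rightarrow> real vec set" where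
  "aff_hull_vec n S = {v. \<exists>T a. finite T \<and> T \<subseteq> S \<and> T \<noteq> {} \<and> sum a T = 1 \<and>
       v = finsum_vec TYPE(real) n (\<lambda>x. a x \<cdot>\<^sub>v x) T}"

definition aff_dim_vec :: "nat \<Rightarrow> real vec set \<Rightarrow> int" where
  "aff_dim_vec n S = (if S = {} then -1 else
     int (subspace_dim n {x - y | x y. x \<in> aff_hull_vec n S \<and> y \<in> aff_hull_vec n S}))"

definition Zset :: "nat \<Rightarrow> real mat \<Rightarrow> real vec \<Rightarrow> nat list \<Rightarrow> (nat \<Rightarrow> real vec set) \<Rightarrow> real vec set" where
  "Zset n B c ms Cs = {x \<in> pos_vecs n. had c (vpow x B) \<in> prod_set ms Cs}"

end

theory Submission
  imports Defs
begin

text \<open>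
  Taking logarithms componentwise turns the monomial map \<open>x \<mapsto> c \<circ> x\<^sup>B\<close> into the affine map
  \<open>ln x \<mapsto> ln c + B\<^sup>T ln x\<close>, and the cone condition becomes linear as well: a positive \<open>z\<close>
  lies in \<open>C\<close> iff its blockwise normalisation \<open>y\<close> lies in \<open>P\<close>, and \<open>ln z - ln y\<close> is then
  constant on every class, i.e. annihilated by \<open>I\<^sup>T\<close>. Hence \<open>x \<in> Z\<^sub>c\<close> iff
  \<open>M\<^sup>T ln x = I\<^sup>T (ln y - ln c)\<close> for some \<open>y \<in> P\<close>. Since \<open>d = 0\<close>, every generalized inverse
  \<open>M\<^sup>*\<close> is a left inverse of \<open>M\<close>, so the solutions are exactly
  \<open>ln x = E\<^sup>T (ln y - ln c) + v\<close> with \<open>v \<in> ker M\<^sup>T = L\<^sup>\<bottom>\<close>, and \<open>(y, v)\<close> is determined by \<open>x\<close>.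
  So \<open>Z\<^sub>c\<close> is in bijection with \<open>P \<times> L\<^sup>\<bottom>\<close>, which gives both remaining claims.
\<close>

section \<open>Offsets of the classes\<close>

lemma offset_0 [simp]: "offset ms 0 = 0"
  unfolding offset_def by simp

lemma offset_Cons_Suc [simp]: "offset (a # ms) (Suc i) = a + offset ms i"
  unfolding offset_def by simp

lemma offset_Suc: "i < length ms \<Longrightarrow> offset ms (Suc i) = offset ms i + ms ! i"
  unfolding offset_def by (simp add: take_Suc_conv_app_nth)

lemma offset_mono: "i \<le> j \<Longrightarrow> offset ms i \<le> offset ms j"
  unfolding offset_def
  by (metis append_take_drop_id le_add1 min.absorb_iff2 min_def sum_list_append take_take)

lemma offset_add_nth_le:
  assumes "i < j" "j \<le> length ms"
  shows "offset ms i + ms ! i \<le> offset ms j"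
proof -
  have "offset ms i + ms ! i = offset ms (Suc i)" using assms by (simp add: offset_Suc)
  also have "\<dots> \<le> offset ms j" using assms by (intro offset_mono) auto
  finally show ?thesis .
qed

lemma offset_add_less_sum_list:
  assumes "i < length ms" "j < ms ! i"
  shows "offset ms i + j < sum_list ms"
proof -
  have "offset ms (length ms) = sum_list ms" unfolding offset_def by simp
  with offset_add_nth_le[of i "length ms" ms] assms show ?thesis by linarith
qed

lemma offset_decomp: "p < sum_list ms \<Longrightarrow> \<exists>i<length ms. \<exists>j<ms ! i. p = offset ms i + j"
proof (induction ms arbitrary: p)
  case Nil
  then show ?case by simp
next
  case (Cons a ms)
  show ?case
  proof (cases "p < a")
    case True
    then show ?thesis by (intro exI[of _ 0]) auto
  next
    case False
    with Cons.prems have "p - a < sum_list ms" by simp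
    from Cons.IH[OF this] obtain i j where "i < length ms" "j < ms ! i" "p - a = offset ms i + j"
      by auto
    with False show ?thesis by (intro exI[of _ "Suc i"]) auto
  qed
qed

lemma offset_add_inj:
  assumes "i < length ms" "j < ms ! i" "i' < length ms" "j' < ms ! i'"
    and "offset ms i + j = offset ms i' + j'"
  shows "i = i' \<and> j = j'"
proof -
  have "\<not> i < i'" using offset_add_nth_le[of i i' ms] assms by auto
  moreover have "\<not> i' < i" using offset_add_nth_le[of i' i ms] assms by auto
  ultimately show ?thesis using assms by auto
qed

lemma eq_0_iff_offset_entries:
  assumes v: "v \<in> carrier_vec (sum_list ns)"
  shows "v = 0\<^sub>v (sum_list ns) \<longleftrightarrow> (\<forall>i<length ns. \<forall>j<ns ! i. v $ (offset ns i + j) = 0)"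
proof
  assume "v = 0\<^sub>v (sum_list ns)"
  then show "\<forall>i<length ns. \<forall>j<ns ! i. v $ (offset ns i + j) = 0"
    using offset_add_less_sum_list by auto
next
  assume zero: "\<forall>i<length ns. \<forall>j<ns ! i. v $ (offset ns i + j) = 0"
  show "v = 0\<^sub>v (sum_list ns)"
  proof (rule eq_vecI)
    fix p assume p: "p < dim_vec (0\<^sub>v (sum_list ns))"
    then obtain i j where "i < length ns" "j < ns ! i" "p = offset ns i + j"
      using offset_decomp[of p ns] by auto
    then show "v $ p = 0\<^sub>v (sum_list ns) $ p" using zero p by simp
  qed (use v in simp)
qed

lemma index_diag_block_mat_offset:
  assumes "i < length As" "r < dim_row (As ! i)" "i' < length As" "s < dim_col (As ! i')"
  shows "diag_block_mat As $$ (offset (map dim_row As) i + r, offset (map dim_col As) i' + s)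
     = (if i = i' then As ! i $$ (r, s) else 0)"
  using assms
proof (induction As arbitrary: i i')
  case Nil
  then show ?case by simp
next
  case (Cons A As)
  have "offset (map dim_row (A # As)) i + r < sum_list (map dim_row (A # As))"
    by (rule offset_add_less_sum_list) (use Cons.prems in \<open>simp_all del: list.map\<close>)
  moreover have "offset (map dim_col (A # As)) i' + s < sum_list (map dim_col (A # As))"
    by (rule offset_add_less_sum_list) (use Cons.prems in \<open>simp_all del: list.map\<close>)
  ultimately show ?case
    using Cons.IH[of "i - 1" "i' - 1"] Cons.prems
    by (cases i; cases i') (simp_all add: Let_def dim_diag_block_mat)
qed

section \<open>The matrix \<open>I\<close> and the vectors constant on each class\<close>

lemma Ik_dims [simp]: "dim_row (Ik a) = a" "dim_col (Ik a) = a - 1"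
  unfolding Ik_def by auto

lemma index_Ik:
  "r < a \<Longrightarrow> s < a - 1 \<Longrightarrow> Ik a $$ (r, s) = (if r = a - 1 then -1 else if r = s then 1 else 0)"
  unfolding Ik_def by auto

lemma map_Ik_dims: "map dim_row (map Ik ms) = ms" "map dim_col (map Ik ms) = map (\<lambda>a. a - 1) ms"
  by (induction ms) auto

lemma sum_list_map_minus_1_add_length:
  "\<forall>a\<in>set ms. a > 0 \<Longrightarrow> sum_list (map (\<lambda>a. a - 1) ms) + length ms = sum_list ms"
  by (induction ms) auto

lemma Imat_dims:
  "dim_row (Imat ms) = sum_list ms" "dim_col (Imat ms) = sum_list (map (\<lambda>a. a - 1) ms)"
  unfolding Imat_def dim_diag_block_mat map_Ik_dims by auto

lemma sum_list_map_minus_1: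
  assumes "\<forall>i<length ms. ms ! i > 0"
  shows "sum_list (map (\<lambda>a. a - 1) ms) = sum_list ms - length ms"
proof -
  have "sum_list (map (\<lambda>a. a - 1) ms) + length ms = sum_list ms"
    using assms by (intro sum_list_map_minus_1_add_length) (simp add: all_set_conv_all_nth)
  then show ?thesis by linarith
qed

lemma Imat_carrier:
  "\<forall>i<length ms. ms ! i > 0 \<Longrightarrow> Imat ms \<in> carrier_mat (sum_list ms) (sum_list ms - length ms)"
  using sum_list_map_minus_1 by (intro carrier_matI) (simp_all add: Imat_dims)

lemma index_Imat_col:
  assumes i: "i < length ms" and s: "s < ms ! i - 1" and p: "p < sum_list ms"
  shows "Imat ms $$ (p, offset (map (\<lambda>a. a - 1) ms) i + s) =
    (if p = offset ms i + s then 1 else 0) - (if p = offset ms i + (ms ! i - 1) then 1 else 0)"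
proof -
  obtain i' r where i': "i' < length ms" "r < ms ! i'" and p_eq: "p = offset ms i' + r"
    using offset_decomp[OF p] by auto
  have "Imat ms $$ (p, offset (map (\<lambda>a. a - 1) ms) i + s) =
      diag_block_mat (map Ik ms) $$
        (offset (map dim_row (map Ik ms)) i' + r, offset (map dim_col (map Ik ms)) i + s)"
    unfolding Imat_def map_Ik_dims p_eq ..
  also have "\<dots> = (if i' = i then Ik (ms ! i) $$ (r, s) else 0)"
    using i i' s by (subst index_diag_block_mat_offset) auto
  finally have entry: "Imat ms $$ (p, offset (map (\<lambda>a. a - 1) ms) i + s) =
      (if i' = i then Ik (ms ! i) $$ (r, s) else 0)" .
  show ?thesis
  proof (cases "i' = i")
    case True
    then show ?thesis using entry i' s by (auto simp: p_eq index_Ik)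
  next
    case False
    have "s < ms ! i" "ms ! i - 1 < ms ! i" using s by linarith+
    then have "p \<noteq> offset ms i + s" "p \<noteq> offset ms i + (ms ! i - 1)"
      using offset_add_inj[OF i' i] p_eq False by metis+
    with entry False show ?thesis by simp
  qed
qed

lemma index_transpose_Imat_mult_vec:
  assumes a: "a \<in> carrier_vec (sum_list ms)" and i: "i < length ms" and s: "s < ms ! i - 1"
  shows "(transpose_mat (Imat ms) *\<^sub>v a) $ (offset (map (\<lambda>a. a - 1) ms) i + s)
     = a $ (offset ms i + s) - a $ (offset ms i + (ms ! i - 1))"
proof -
  let ?q = "offset (map (\<lambda>a. a - 1) ms) i + s"
  have q: "?q < dim_col (Imat ms)"
    unfolding Imat_dims using offset_add_less_sum_list[of i "map (\<lambda>a. a - 1) ms" s] i s by auto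
  have "(transpose_mat (Imat ms) *\<^sub>v a) $ ?q = (\<Sum>p<sum_list ms. Imat ms $$ (p, ?q) * a $ p)"
    using a q by (simp add: Imat_dims scalar_prod_def lessThan_atLeast0)
  also have "\<dots> = (\<Sum>p<sum_list ms. (if p = offset ms i + s then a $ p else 0)
       - (if p = offset ms i + (ms ! i - 1) then a $ p else 0))"
    by (intro sum.cong refl) (subst index_Imat_col[OF i s], auto)
  also have "\<dots> = a $ (offset ms i + s) - a $ (offset ms i + (ms ! i - 1))"
  proof -
    have sum_delta2: "(\<Sum>p<N. (if p = X then a $ p else 0) - (if p = Y then a $ p else 0))
        = a $ X - a $ Y" if "X < N" "Y < N" for X Y N
      using that by (simp add: sum_subtractf)
    have "s < ms ! i" "ms ! i - 1 < ms ! i" using s by linarith+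
    then show ?thesis using sum_delta2 offset_add_less_sum_list[OF i] by presburger
  qed
  finally show ?thesis .
qed

definition block_const :: "nat list \<Rightarrow> real vec \<Rightarrow> bool" where
  "block_const ms a \<longleftrightarrow>
     (\<forall>i<length ms. \<forall>j<ms ! i. a $ (offset ms i + j) = a $ (offset ms i + (ms ! i - 1)))"

lemma block_constD:
  assumes "block_const ms a" "i < length ms" "j < ms ! i"
  shows "a $ (offset ms i + j) = a $ (offset ms i + (ms ! i - 1))"
  using assms unfolding block_const_def by meson

lemma transpose_Imat_mult_vec_eq_0_iff:
  assumes a: "a \<in> carrier_vec (sum_list ms)" and ms_pos: "\<forall>i<length ms. ms ! i > 0"
  shows "transpose_mat (Imat ms) *\<^sub>v a = 0\<^sub>v (sum_list ms - length ms) \<longleftrightarrow> block_const ms a"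
proof -
  have "transpose_mat (Imat ms) *\<^sub>v a \<in> carrier_vec (sum_list (map (\<lambda>a. a - 1) ms))"
    unfolding carrier_vec_def by (simp add: Imat_dims)
  from eq_0_iff_offset_entries[OF this]
  have "transpose_mat (Imat ms) *\<^sub>v a = 0\<^sub>v (sum_list ms - length ms) \<longleftrightarrow>
      (\<forall>i<length ms. \<forall>s<ms ! i - 1.
         (transpose_mat (Imat ms) *\<^sub>v a) $ (offset (map (\<lambda>a. a - 1) ms) i + s) = 0)"
    unfolding sum_list_map_minus_1[OF ms_pos] by simp
  also have "\<dots> \<longleftrightarrow> block_const ms a"
    unfolding block_const_def
  proof (rule all_cong1, rule imp_cong[OF refl])
    fix i assume i: "i < length ms"
    let ?last = "offset ms i + (ms ! i - 1)"
    show "(\<forall>s<ms ! i - 1.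
        (transpose_mat (Imat ms) *\<^sub>v a) $ (offset (map (\<lambda>a. a - 1) ms) i + s) = 0) \<longleftrightarrow>
      (\<forall>j<ms ! i. a $ (offset ms i + j) = a $ ?last)"
    proof (intro iffI allI impI)
      fix j assume zero: "\<forall>s<ms ! i - 1.
          (transpose_mat (Imat ms) *\<^sub>v a) $ (offset (map (\<lambda>a. a - 1) ms) i + s) = 0"
        and j: "j < ms ! i"
      show "a $ (offset ms i + j) = a $ ?last"
      proof (cases "j < ms ! i - 1")
        case True
        then show ?thesis using zero index_transpose_Imat_mult_vec[OF a i True] by simp
      next
        case False
        then have "j = ms ! i - 1" using j by linarith
        then show ?thesis by simp
      qed
    next
      fix s assume const: "\<forall>j<ms ! i. a $ (offset ms i + j) = a $ ?last"
        and s: "s < ms ! i - 1"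
      then have "a $ (offset ms i + s) = a $ ?last" by simp
      then show "(transpose_mat (Imat ms) *\<^sub>v a) $ (offset (map (\<lambda>a. a - 1) ms) i + s) = 0"
        using index_transpose_Imat_mult_vec[OF a i s] by simp
    qed
  qed
  finally show ?thesis .
qed

section \<open>Componentwise logarithm and exponential\<close>

definition lnv :: "real vec \<Rightarrow> real vec" where
  "lnv x = map_vec ln x"

lemma pos_vecs_carrier: "x \<in> pos_vecs k \<Longrightarrow> x \<in> carrier_vec k"
  unfolding pos_vecs_def by auto

lemma index_pos_vecs: "x \<in> pos_vecs k \<Longrightarrow> i < k \<Longrightarrow> x $ i > 0"
  unfolding pos_vecs_def by auto

lemma lnv_carrier [simp]: "x \<in> carrier_vec k \<Longrightarrow> lnv x \<in> carrier_vec k"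
  unfolding lnv_def by auto

lemma dim_lnv [simp]: "dim_vec (lnv x) = dim_vec x"
  unfolding lnv_def by auto

lemma index_lnv [simp]: "i < dim_vec x \<Longrightarrow> lnv x $ i = ln (x $ i)"
  unfolding lnv_def by auto

lemma dim_vexp [simp]: "dim_vec (vexp x) = dim_vec x"
  unfolding vexp_def by auto

lemma index_vexp [simp]: "i < dim_vec x \<Longrightarrow> vexp x $ i = exp (x $ i)"
  unfolding vexp_def by auto

lemma vexp_carrier [simp]: "x \<in> carrier_vec k \<Longrightarrow> vexp x \<in> carrier_vec k"
  unfolding vexp_def by auto

lemma vexp_pos_vecs: "a \<in> carrier_vec k \<Longrightarrow> vexp a \<in> pos_vecs k"
  unfolding pos_vecs_def by auto

lemma vexp_lnv: "x \<in> pos_vecs k \<Longrightarrow> vexp (lnv x) = x"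
  by (intro eq_vecI) (auto simp: pos_vecs_def)

lemma lnv_vexp [simp]: "lnv (vexp a) = a"
  by (intro eq_vecI) auto

lemma had_vexp: "a \<in> carrier_vec k \<Longrightarrow> b \<in> carrier_vec k \<Longrightarrow> had (vexp a) (vexp b) = vexp (a + b)"
  unfolding had_def by (intro eq_vecI) (auto simp: exp_add)

lemma had_vinv_pos_vecs: "y \<in> pos_vecs k \<Longrightarrow> c \<in> pos_vecs k \<Longrightarrow> had y (vinv c) \<in> pos_vecs k"
  unfolding had_def vinv_def pos_vecs_def by auto

lemma lnv_had_vinv:
  assumes "y \<in> pos_vecs k" "c \<in> pos_vecs k"
  shows "lnv (had y (vinv c)) = lnv y - lnv c"
proof (rule eq_vecI)
  have dims: "dim_vec y = k" "dim_vec c = k"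
    using pos_vecs_carrier[OF assms(1)] pos_vecs_carrier[OF assms(2)] by auto
  then show "dim_vec (lnv (had y (vinv c))) = dim_vec (lnv y - lnv c)" by (simp add: had_def)
  fix i assume "i < dim_vec (lnv y - lnv c)"
  then have "i < k" using dims by simp
  then have "y $ i > 0" "c $ i > 0" using assms index_pos_vecs by auto
  with dims \<open>i < k\<close> show "lnv (had y (vinv c)) $ i = (lnv y - lnv c) $ i"
    by (simp add: had_def vinv_def ln_mult ln_inverse)
qed

lemma vpow_eq_vexp:
  assumes x: "x \<in> pos_vecs r" and Y: "Y \<in> carrier_mat r p"
  shows "vpow x Y = vexp (transpose_mat Y *\<^sub>v lnv x)"
proof (rule eq_vecI)
  fix j assume "j < dim_vec (vexp (transpose_mat Y *\<^sub>v lnv x))"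
  then have j: "j < p" using Y by simp
  have x_carrier: "x \<in> carrier_vec r" and x_pos: "\<And>i. i < r \<Longrightarrow> x $ i > 0"
    using x by (auto simp: pos_vecs_def)
  have "vpow x Y $ j = (\<Prod>i<r. exp (Y $$ (i, j) * ln (x $ i)))"
    unfolding vpow_def using j Y x_carrier x_pos
    by (auto simp: powr_def less_imp_neq[OF x_pos, symmetric] intro!: prod.cong)
  also have "\<dots> = exp (\<Sum>i<r. Y $$ (i, j) * ln (x $ i))"
    by (simp add: exp_sum)
  also have "(\<Sum>i<r. Y $$ (i, j) * ln (x $ i)) = (transpose_mat Y *\<^sub>v lnv x) $ j"
    using j Y x_carrier by (simp add: scalar_prod_def lessThan_atLeast0)
  finally show "vpow x Y $ j = vexp (transpose_mat Y *\<^sub>v lnv x) $ j"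
    using j Y by simp
qed (use Y in \<open>simp add: vpow_def\<close>)

lemma had_vpow_eq_vexp:
  assumes c: "c \<in> pos_vecs m" and x: "x \<in> pos_vecs n" and B: "B \<in> carrier_mat n m"
  shows "had c (vpow x B) = vexp (lnv c + transpose_mat B *\<^sub>v lnv x)"
proof -
  have "had c (vpow x B) = had (vexp (lnv c)) (vexp (transpose_mat B *\<^sub>v lnv x))"
    using vpow_eq_vexp[OF x B] vexp_lnv[OF c] by simp
  also have "\<dots> = vexp (lnv c + transpose_mat B *\<^sub>v lnv x)"
    using B pos_vecs_carrier[OF c] pos_vecs_carrier[OF x] by (intro had_vexp[of _ m]) auto
  finally show ?thesis .
qed

lemma had_vpow_had_vinv_eq_vexp:
  assumes y: "y \<in> pos_vecs m" and c: "c \<in> pos_vecs m" and E: "E \<in> carrier_mat m n"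
    and v: "v \<in> carrier_vec n"
  shows "had (vpow (had y (vinv c)) E) (vexp v) = vexp (transpose_mat E *\<^sub>v (lnv y - lnv c) + v)"
proof -
  have "vpow (had y (vinv c)) E = vexp (transpose_mat E *\<^sub>v (lnv y - lnv c))"
    using vpow_eq_vexp[OF had_vinv_pos_vecs[OF y c] E] lnv_had_vinv[OF y c] by simp
  also have "had \<dots> (vexp v) = vexp (transpose_mat E *\<^sub>v (lnv y - lnv c) + v)"
    using E v pos_vecs_carrier[OF y] pos_vecs_carrier[OF c] by (intro had_vexp[of _ n]) auto
  finally show ?thesis .
qed

section \<open>Cones and the normalisation onto \<open>P\<close>\<close>

lemma dim_block [simp]: "dim_vec (block ms y i) = ms ! i"
  unfolding block_def by simp

lemma index_block [simp]: "j < ms ! i \<Longrightarrow> block ms y i $ j = y $ (offset ms i + j)"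
  unfolding block_def by simp

lemma prod_set_subset_pos_vecs:
  assumes Cs: "\<forall>i<length ms. Cs i \<subseteq> pos_vecs (ms ! i)"
  shows "prod_set ms Cs \<subseteq> pos_vecs (sum_list ms)"
proof
  fix z assume z: "z \<in> prod_set ms Cs"
  have "z $ p > 0" if p: "p < sum_list ms" for p
  proof -
    obtain i j where ij: "i < length ms" "j < ms ! i" and p_eq: "p = offset ms i + j"
      using offset_decomp[OF p] by auto
    have "block ms z i \<in> pos_vecs (ms ! i)" using z Cs ij unfolding prod_set_def by auto
    then show ?thesis using ij p_eq by (auto simp: pos_vecs_def block_def)
  qed
  then show "z \<in> pos_vecs (sum_list ms)" using z unfolding prod_set_def pos_vecs_def by auto
qed

lemma Pset_subset_pos_vecs:
  "\<forall>i<length ms. Cs i \<subseteq> pos_vecs (ms ! i) \<Longrightarrow> Pset ms Cs \<subseteq> pos_vecs (sum_list ms)"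
  unfolding Pset_def using prod_set_subset_pos_vecs by blast

lemma block_const_lnv_diff_ratio:
  assumes a: "a \<in> pos_vecs (sum_list ms)" and b: "b \<in> pos_vecs (sum_list ms)"
    and const: "block_const ms (lnv a - lnv b)" and i: "i < length ms" and j: "j < ms ! i"
  defines q_def: "q \<equiv> offset ms i + (ms ! i - 1)"
  shows "a $ (offset ms i + j) = a $ q / b $ q * b $ (offset ms i + j)"
proof -
  let ?p = "offset ms i + j"
  have p: "?p < sum_list ms" using offset_add_less_sum_list[OF i j] .
  have l: "q < sum_list ms" unfolding q_def using j by (intro offset_add_less_sum_list[OF i]) linarith
  have pos: "a $ ?p > 0" "a $ q > 0" "b $ ?p > 0" "b $ q > 0"
    using a b p l by (auto simp: pos_vecs_def)
  have "(lnv a - lnv b) $ ?p = (lnv a - lnv b) $ q"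
    unfolding q_def using block_constD[OF const i j] .
  then have "ln (a $ ?p) - ln (b $ ?p) = ln (a $ q) - ln (b $ q)"
    using p l pos_vecs_carrier[OF a] pos_vecs_carrier[OF b] by simp
  then have "ln (a $ ?p / b $ ?p) = ln (a $ q / b $ q)" using pos by (simp add: ln_div)
  then have "a $ ?p / b $ ?p = a $ q / b $ q" using pos by simp
  then show ?thesis using pos by (simp add: field_simps)
qed

lemma prod_set_if_block_const:
  assumes Cs: "\<forall>i<length ms. Cs i \<subseteq> pos_vecs (ms ! i) \<and> is_cone (Cs i)"
    and ms_pos: "\<forall>i<length ms. ms ! i > 0"
    and y: "y \<in> prod_set ms Cs" and z: "z \<in> pos_vecs (sum_list ms)"
    and const: "block_const ms (lnv z - lnv y)"
  shows "z \<in> prod_set ms Cs"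
proof -
  have y_pos: "y \<in> pos_vecs (sum_list ms)" using prod_set_subset_pos_vecs Cs y by blast
  have "block ms z i \<in> Cs i" if i: "i < length ms" for i
  proof -
    define q where "q = offset ms i + (ms ! i - 1)"
    have "q < sum_list ms"
      unfolding q_def using ms_pos i by (intro offset_add_less_sum_list[OF i]) auto
    then have "z $ q / y $ q > 0" using z y_pos by (auto simp: pos_vecs_def)
    moreover have "block ms z i = (z $ q / y $ q) \<cdot>\<^sub>v block ms y i"
    proof (rule eq_vecI)
      fix j assume "j < dim_vec ((z $ q / y $ q) \<cdot>\<^sub>v block ms y i)"
      then have j: "j < ms ! i" by simp
      show "block ms z i $ j = ((z $ q / y $ q) \<cdot>\<^sub>v block ms y i) $ j"
        using block_const_lnv_diff_ratio[OF z y_pos const i j] j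
        unfolding q_def by (simp add: block_def)
    qed simp
    moreover have "block ms y i \<in> Cs i" using y i unfolding prod_set_def by auto
    ultimately show ?thesis using Cs i unfolding is_cone_def by auto
  qed
  then show ?thesis using z unfolding prod_set_def pos_vecs_def by auto
qed

definition block_index :: "nat list \<Rightarrow> nat \<Rightarrow> nat" where
  "block_index ms p = (SOME i. i < length ms \<and> (\<exists>j<ms ! i. p = offset ms i + j))"

lemma block_index_offset_add:
  assumes "i < length ms" "j < ms ! i"
  shows "block_index ms (offset ms i + j) = i"
proof -
  let ?i' = "block_index ms (offset ms i + j)"
  have "\<exists>i'. i' < length ms \<and> (\<exists>j'<ms ! i'. offset ms i + j = offset ms i' + j')"
    using assms by auto
  then obtain j' where "?i' < length ms" "j' < ms ! ?i'" "offset ms i + j = offset ms ?i' + j'"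
    unfolding block_index_def by (rule someI_ex[THEN conjE]) blast
  then show ?thesis using offset_add_inj[OF assms] by metis
qed

definition block_sum :: "nat list \<Rightarrow> real vec \<Rightarrow> nat \<Rightarrow> real" where
  "block_sum ms z i = (\<Sum>j<ms ! i. z $ (offset ms i + j))"

definition block_normalise :: "nat list \<Rightarrow> real vec \<Rightarrow> real vec" where
  "block_normalise ms z = vec (sum_list ms) (\<lambda>p. z $ p / block_sum ms z (block_index ms p))"

lemma block_sum_pos:
  assumes z: "z \<in> pos_vecs (sum_list ms)" and i: "i < length ms" and "ms ! i > 0"
  shows "block_sum ms z i > 0"
  unfolding block_sum_def using assms offset_add_less_sum_list[OF i]
  by (intro sum_pos) (auto simp: pos_vecs_def)

lemma dim_block_normalise [simp]: "dim_vec (block_normalise ms z) = sum_list ms"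
  unfolding block_normalise_def by simp

lemma index_block_normalise:
  assumes "i < length ms" "j < ms ! i"
  shows "block_normalise ms z $ (offset ms i + j) = z $ (offset ms i + j) / block_sum ms z i"
  unfolding block_normalise_def
  using offset_add_less_sum_list[OF assms] block_index_offset_add[OF assms] by simp

lemma block_normalise_mem_Pset:
  assumes Cs: "\<forall>i<length ms. Cs i \<subseteq> pos_vecs (ms ! i) \<and> is_cone (Cs i)"
    and ms_pos: "\<forall>i<length ms. ms ! i > 0"
    and z: "z \<in> prod_set ms Cs"
  shows "block_normalise ms z \<in> Pset ms Cs"
proof -
  have z_pos: "z \<in> pos_vecs (sum_list ms)" using prod_set_subset_pos_vecs Cs z by blast
  have "block ms (block_normalise ms z) i \<in> Cs i \<and>
      block ms (block_normalise ms z) i \<in> simplex (ms ! i)" if i: "i < length ms" for i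
  proof
    have S_pos: "block_sum ms z i > 0" using block_sum_pos[OF z_pos i] ms_pos i by simp
    have "block ms (block_normalise ms z) i = (1 / block_sum ms z i) \<cdot>\<^sub>v block ms z i"
      by (rule eq_vecI) (auto simp: index_block_normalise[OF i])
    moreover have "block ms z i \<in> Cs i" using z i unfolding prod_set_def by auto
    ultimately show "block ms (block_normalise ms z) i \<in> Cs i"
      using Cs i S_pos unfolding is_cone_def by auto
    have "(\<Sum>j<ms ! i. block_normalise ms z $ (offset ms i + j)) =
        (\<Sum>j<ms ! i. z $ (offset ms i + j)) / block_sum ms z i"
      by (simp add: index_block_normalise[OF i] sum_divide_distrib)
    also have "\<dots> = 1" using S_pos by (simp add: block_sum_def)
    moreover have "block_normalise ms z $ (offset ms i + j) \<ge> 0" if "j < ms ! i" for j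
      using index_block_normalise[OF i that] S_pos z_pos offset_add_less_sum_list[OF i that]
      by (simp add: pos_vecs_def less_imp_le)
    ultimately show "block ms (block_normalise ms z) i \<in> simplex (ms ! i)"
      unfolding simplex_def carrier_vec_def by simp
  qed
  then show ?thesis unfolding Pset_def Delta_def prod_set_def carrier_vec_def by simp
qed

lemma Pset_ne:
  assumes Cs: "\<forall>i<length ms. Cs i \<subseteq> pos_vecs (ms ! i) \<and> is_cone (Cs i)"
    and ms_pos: "\<forall>i<length ms. ms ! i > 0"
    and "prod_set ms Cs \<noteq> {}"
  shows "Pset ms Cs \<noteq> {}"
  using block_normalise_mem_Pset[OF Cs ms_pos] assms(3) by blast

lemma block_const_lnv_diff_block_normalise:
  assumes z: "z \<in> pos_vecs (sum_list ms)" and ms_pos: "\<forall>i<length ms. ms ! i > 0"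
  shows "block_const ms (lnv z - lnv (block_normalise ms z))"
proof -
  have block_const_eq:
    "(lnv z - lnv (block_normalise ms z)) $ (offset ms i + j) = ln (block_sum ms z i)"
    if i: "i < length ms" and j: "j < ms ! i" for i j
    using offset_add_less_sum_list[OF i j] pos_vecs_carrier[OF z]
      index_pos_vecs[OF z offset_add_less_sum_list[OF i j]] block_sum_pos[OF z i] ms_pos i
    by (simp add: index_block_normalise[OF i j] ln_div)
  show ?thesis
    unfolding block_const_def
  proof (intro allI impI)
    fix i j assume i: "i < length ms" and j: "j < ms ! i"
    then have "ms ! i - 1 < ms ! i" by linarith
    from block_const_eq[OF i j] block_const_eq[OF i this]
    show "(lnv z - lnv (block_normalise ms z)) $ (offset ms i + j) =
        (lnv z - lnv (block_normalise ms z)) $ (offset ms i + (ms ! i - 1))"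
      by simp
  qed
qed

lemma block_sum_Pset: "y \<in> Pset ms Cs \<Longrightarrow> i < length ms \<Longrightarrow> block_sum ms y i = 1"
  unfolding Pset_def Delta_def prod_set_def simplex_def block_sum_def by auto

lemma Pset_eq_if_block_const:
  assumes Cs: "\<forall>i<length ms. Cs i \<subseteq> pos_vecs (ms ! i)"
    and y1: "y1 \<in> Pset ms Cs" and y2: "y2 \<in> Pset ms Cs"
    and const: "block_const ms (lnv y1 - lnv y2)"
  shows "y1 = y2"
proof (rule eq_vecI)
  have pos: "y1 \<in> pos_vecs (sum_list ms)" "y2 \<in> pos_vecs (sum_list ms)"
    using Pset_subset_pos_vecs[OF Cs] y1 y2 by auto
  then show "dim_vec y1 = dim_vec y2" by (auto simp: pos_vecs_def)
  fix p assume "p < dim_vec y2"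
  then have "p < sum_list ms" using pos by (auto simp: pos_vecs_def)
  then obtain i j where i: "i < length ms" and j: "j < ms ! i" and p_eq: "p = offset ms i + j"
    using offset_decomp by blast
  define t where "t = y1 $ (offset ms i + (ms ! i - 1)) / y2 $ (offset ms i + (ms ! i - 1))"
  have ratio: "y1 $ (offset ms i + j') = t * y2 $ (offset ms i + j')" if "j' < ms ! i" for j'
    unfolding t_def using block_const_lnv_diff_ratio[OF pos const i that] by simp
  have "1 = block_sum ms y1 i" using block_sum_Pset[OF y1 i] by simp
  also have "\<dots> = t * block_sum ms y2 i"
    unfolding block_sum_def by (simp add: ratio sum_distrib_left)
  also have "\<dots> = t" using block_sum_Pset[OF y2 i] by simp
  finally show "y1 $ p = y2 $ p" using ratio[OF j] p_eq by simp
qed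

lemma prod_set_iff_block_const:
  assumes Cs: "\<forall>i<length ms. Cs i \<subseteq> pos_vecs (ms ! i) \<and> is_cone (Cs i)"
    and ms_pos: "\<forall>i<length ms. ms ! i > 0"
    and z: "z \<in> pos_vecs (sum_list ms)"
  shows "z \<in> prod_set ms Cs \<longleftrightarrow> (\<exists>y\<in>Pset ms Cs. block_const ms (lnv z - lnv y))"
  using block_normalise_mem_Pset[OF Cs ms_pos] block_const_lnv_diff_block_normalise[OF z ms_pos]
    prod_set_if_block_const[OF Cs ms_pos _ z]
  unfolding Pset_def by blast

section \<open>Subspaces of \<open>\<real>\<^sup>n\<close> and their dimension\<close>

lemma subspace_vecI:
  fixes W :: "real vec set"
  assumes "W \<subseteq> carrier_vec n" and "0\<^sub>v n \<in> W"
    and "\<And>a b. a \<in> W \<Longrightarrow> b \<in> W \<Longrightarrow> a + b \<in> W"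
    and "\<And>r a. a \<in> W \<Longrightarrow> r \<cdot>\<^sub>v a \<in> W"
  shows "subspace class_ring W (module_vec TYPE(real) n)"
proof -
  interpret vec_space "TYPE(real)" n .
  show ?thesis unfolding subspace_def
    by (intro conjI vec_vs submodule.intro vec_module) (use assms in auto)
qed

lemma subspace_fin_dim:
  fixes W :: "real vec set"
  assumes W: "subspace class_ring W (module_vec TYPE(real) n)"
  shows "vectorspace.fin_dim class_ring ((module_vec TYPE(real) n)\<lparr>carrier := W\<rparr>)"
proof -
  interpret vec_space "TYPE(real)" n .
  have vs_W: "vectorspace class_ring (vs W)" using subspace_is_vs[OF W] .
  have subm: "submodule class_ring W V" using W unfolding subspace_def by auto
  then have W_carrier: "W \<subseteq> carrier V" unfolding submodule_def by auto
  let ?li = "\<lambda>S. S \<subseteq> carrier (vs W) \<and> module.lin_indpt class_ring (vs W) S"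
  have bounded: "finite S \<and> card S \<le> dim" if "?li S" for S
  proof -
    have "S \<subseteq> W" using that by simp
    moreover from this have "\<not> lin_dep S" using that span_li_not_depend(2)[OF _ subm] by simp
    ultimately show ?thesis using li_le_dim[OF fin_dim, of S] W_carrier by auto
  qed
  obtain \<beta> where "finite \<beta>" "basis \<beta>" using finite_basis_exists[OF fin_dim] by auto
  then have "lin_indpt {}" using subset_li_is_li[of \<beta> "{}"] unfolding basis_def by auto
  then have "?li {}" using span_li_not_depend(2)[of "{}" W, OF _ subm] by simp
  from maximal_exists[of ?li, OF bounded this] obtain A where A: "finite A" "maximal A ?li" by auto
  have "vectorspace.basis class_ring (vs W) A" using vectorspace.max_li_is_basis[OF vs_W A(2)] .
  then show ?thesis
    using A(1) vectorspace.fin_dim_def[OF vs_W] vectorspace.basis_def[OF vs_W] by auto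
qed

lemma subspace_dim_eq_0_iff:
  fixes W :: "real vec set"
  assumes W: "subspace class_ring W (module_vec TYPE(real) n)"
  shows "subspace_dim n W = 0 \<longleftrightarrow> W = {0\<^sub>v n}"
proof -
  interpret vec_space "TYPE(real)" n .
  have vs_W: "vectorspace class_ring (vs W)" using subspace_is_vs[OF W] .
  have subm: "submodule class_ring W V" using W unfolding subspace_def by auto
  have span_empty: "LinearCombinations.module.span class_ring (vs W) {} = {0\<^sub>v n}"
    using span_li_not_depend(1)[of "{}" W, OF _ subm] span_empty by simp
  show ?thesis
  proof
    assume "subspace_dim n W = 0"
    obtain A where A: "finite A" "vectorspace.basis class_ring (vs W) A"
      using vectorspace.finite_basis_exists[OF vs_W subspace_fin_dim[OF W]] by auto
    with \<open>subspace_dim n W = 0\<close> have "A = {}"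
      using vectorspace.dim_basis[OF vs_W A] unfolding subspace_dim_def by simp
    then show "W = {0\<^sub>v n}" using A(2) span_empty unfolding vectorspace.basis_def[OF vs_W] by simp
  next
    assume W_0: "W = {0\<^sub>v n}"
    obtain \<beta> where "finite \<beta>" "basis \<beta>" using finite_basis_exists[OF fin_dim] by auto
    then have "lin_indpt {}" using subset_li_is_li[of \<beta> "{}"] unfolding basis_def by auto
    then have "module.lin_indpt class_ring (vs W) {}"
      using span_li_not_depend(2)[of "{}" W, OF _ subm] by simp
    then have "vectorspace.basis class_ring (vs W) {}"
      unfolding vectorspace.basis_def[OF vs_W] using span_empty W_0 by simp
    then show "subspace_dim n W = 0"
      using vectorspace.dim_basis[OF vs_W] unfolding subspace_dim_def by fastforce
  qed
qed

lemma mat_kernel_subspace: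
  fixes A :: "real mat"
  assumes A: "A \<in> carrier_mat r c"
  shows "subspace class_ring (mat_kernel A) (module_vec TYPE(real) c)"
proof (rule subspace_vecI)
  show "mat_kernel A \<subseteq> carrier_vec c" by (rule mat_kernel_carrier[OF A])
  show "0\<^sub>v c \<in> mat_kernel A" using A by (intro mat_kernelI[OF A]) auto
next
  fix a b assume a: "a \<in> mat_kernel A" and b: "b \<in> mat_kernel A"
  then have "A *\<^sub>v (a + b) = A *\<^sub>v a + A *\<^sub>v b"
    using mat_kernelD(1)[OF A] by (intro mult_add_distrib_mat_vec[OF A]) auto
  then show "a + b \<in> mat_kernel A"
    using mat_kernelD[OF A a] mat_kernelD[OF A b] by (intro mat_kernelI[OF A]) auto
next
  fix t a assume "a \<in> mat_kernel A"
  then show "t \<cdot>\<^sub>v a \<in> mat_kernel A" by (rule mat_kernel_smult[OF A])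
qed

lemma kernel_dim_eq_0_iff:
  fixes A :: "real mat"
  assumes A: "A \<in> carrier_mat r c"
  shows "kernel_dim A = 0 \<longleftrightarrow> mat_kernel A = {0\<^sub>v c}"
proof -
  have "kernel_dim A = subspace_dim c (mat_kernel A)"
    unfolding kernel_dim_def subspace_dim_def using A by simp
  then show ?thesis using subspace_dim_eq_0_iff[OF mat_kernel_subspace[OF A]] by simp
qed

lemma orth_compl_mat_image_eq_mat_kernel:
  fixes M :: "real mat"
  assumes M: "M \<in> carrier_mat n k"
  shows "orth_compl n {M *\<^sub>v z | z. z \<in> carrier_vec k} = mat_kernel (transpose_mat M)"
proof -
  have Mt: "transpose_mat M \<in> carrier_mat k n" using M by simp
  have adjoint: "v \<bullet> (M *\<^sub>v z) = (transpose_mat M *\<^sub>v v) \<bullet> z"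
    if "v \<in> carrier_vec n" "z \<in> carrier_vec k" for v z
    using transpose_vec_mult_scalar[OF M that(2,1)] by simp
  show ?thesis
  proof (intro equalityI subsetI)
    fix v assume "v \<in> orth_compl n {M *\<^sub>v z | z. z \<in> carrier_vec k}"
    then have v: "v \<in> carrier_vec n" and orth: "\<And>z. z \<in> carrier_vec k \<Longrightarrow> v \<bullet> (M *\<^sub>v z) = 0"
      unfolding orth_compl_def by auto
    have "transpose_mat M *\<^sub>v v = 0\<^sub>v k"
    proof (rule eq_vecI)
      fix j assume "j < dim_vec (0\<^sub>v k)"
      then have j: "j < k" by simp
      have "(transpose_mat M *\<^sub>v v) $ j = (transpose_mat M *\<^sub>v v) \<bullet> unit_vec k j"
        using j Mt v by simp
      also have "\<dots> = 0" using orth[of "unit_vec k j"] adjoint[OF v, of "unit_vec k j"] j by simp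
      finally show "(transpose_mat M *\<^sub>v v) $ j = 0\<^sub>v k $ j" using j by simp
    qed (use M in simp)
    then show "v \<in> mat_kernel (transpose_mat M)" by (intro mat_kernelI[OF Mt v])
  next
    fix v assume "v \<in> mat_kernel (transpose_mat M)"
    from mat_kernelD[OF Mt this] show "v \<in> orth_compl n {M *\<^sub>v z | z. z \<in> carrier_vec k}"
      unfolding orth_compl_def using adjoint by auto
  qed
qed

lemma vec_eq_if_diff_eq_0:
  fixes x y :: "real vec"
  assumes "x \<in> carrier_vec m" "y \<in> carrier_vec m" "x - y = 0\<^sub>v m"
  shows "x = y"
proof (rule eq_vecI)
  fix i assume "i < dim_vec y"
  then have "i < m" using assms by simp
  then have "x $ i - y $ i = 0" using arg_cong[OF assms(3), of "\<lambda>v. v $ i"] assms(1,2) by simp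
  then show "x $ i = y $ i" by simp
qed (use assms in simp)

lemma generalized_inverse_left_inverse:
  fixes M Ms :: "real mat"
  assumes M: "M \<in> carrier_mat n k" and Ms: "Ms \<in> carrier_mat k n"
    and ginv: "M * Ms * M = M" and ker: "mat_kernel M = {0\<^sub>v k}"
  shows "Ms * M = 1\<^sub>m k"
proof -
  have MsM: "Ms * M \<in> carrier_mat k k" using M Ms by simp
  have fixes_all: "(Ms * M) *\<^sub>v z = z" if z: "z \<in> carrier_vec k" for z
  proof -
    have "M *\<^sub>v ((Ms * M) *\<^sub>v z - z) = (M * (Ms * M)) *\<^sub>v z - M *\<^sub>v z"
      using M MsM z by (simp add: mult_minus_distrib_mat_vec)
    also have "M * (Ms * M) = M" using ginv assoc_mult_mat[OF M Ms M] by simp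
    finally have "(Ms * M) *\<^sub>v z - z \<in> mat_kernel M"
      using M MsM z by (intro mat_kernelI[OF M]) auto
    then show ?thesis using ker vec_eq_if_diff_eq_0[of _ k z] MsM z by auto
  qed
  show ?thesis
  proof (rule eq_matI)
    fix i j assume i: "i < dim_row (1\<^sub>m k)" and j: "j < dim_col (1\<^sub>m k)"
    have "(Ms * M) $$ (i, j) = ((Ms * M) *\<^sub>v unit_vec k j) $ i"
      using i j MsM Ms M by (simp add: mult_mat_vec_def carrier_matD)
    then show "(Ms * M) $$ (i, j) = 1\<^sub>m k $$ (i, j)" using fixes_all[of "unit_vec k j"] i j by simp
  qed (use MsM in auto)
qed

lemma transpose_mult_vec_eq_iff:
  fixes M Ms :: "real mat"
  assumes M: "M \<in> carrier_mat n k" and Ms: "Ms \<in> carrier_mat k n" and left_inv: "Ms * M = 1\<^sub>m k"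
    and u: "u \<in> carrier_vec n" and b: "b \<in> carrier_vec k"
  shows "transpose_mat M *\<^sub>v u = b \<longleftrightarrow>
    (\<exists>v\<in>mat_kernel (transpose_mat M). u = transpose_mat Ms *\<^sub>v b + v)"
proof -
  have Mt: "transpose_mat M \<in> carrier_mat k n" and Mst: "transpose_mat Ms \<in> carrier_mat n k"
    using M Ms by auto
  have "transpose_mat M * transpose_mat Ms = 1\<^sub>m k"
    using transpose_mult[OF Ms M] left_inv by simp
  then have particular: "transpose_mat M *\<^sub>v (transpose_mat Ms *\<^sub>v b) = b"
    using Mt Mst b by (simp flip: assoc_mult_mat_vec)
  show ?thesis
  proof
    assume eq: "transpose_mat M *\<^sub>v u = b"
    define v where "v = u - transpose_mat Ms *\<^sub>v b"
    have "transpose_mat M *\<^sub>v v = transpose_mat M *\<^sub>v u - transpose_mat M *\<^sub>v (transpose_mat Ms *\<^sub>v b)"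
      unfolding v_def using Mt Mst u b by (intro mult_minus_distrib_mat_vec) auto
    also have "\<dots> = 0\<^sub>v k" using eq particular b by simp
    finally have "v \<in> mat_kernel (transpose_mat M)"
      using Mst u b unfolding v_def by (intro mat_kernelI[OF Mt]) auto
    moreover have "u = transpose_mat Ms *\<^sub>v b + v"
      unfolding v_def using Mst u b by (intro eq_vecI) auto
    ultimately show "\<exists>v\<in>mat_kernel (transpose_mat M). u = transpose_mat Ms *\<^sub>v b + v" by blast
  next
    assume "\<exists>v\<in>mat_kernel (transpose_mat M). u = transpose_mat Ms *\<^sub>v b + v"
    then obtain v where v: "v \<in> mat_kernel (transpose_mat M)"
      and u_eq: "u = transpose_mat Ms *\<^sub>v b + v" by blast
    have "transpose_mat M *\<^sub>v u = transpose_mat M *\<^sub>v (transpose_mat Ms *\<^sub>v b) + transpose_mat M *\<^sub>v v"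
      unfolding u_eq using Mt Mst b mat_kernelD(1)[OF Mt v]
      by (intro mult_add_distrib_mat_vec) auto
    then show "transpose_mat M *\<^sub>v u = b" using particular mat_kernelD[OF Mt v] b by simp
  qed
qed

section \<open>Affine hulls\<close>

lemma finsum_vec_smult_carrier:
  "finite T \<Longrightarrow> T \<subseteq> carrier_vec m \<Longrightarrow> finsum_vec TYPE(real) m (\<lambda>x. a x \<cdot>\<^sub>v x) T \<in> carrier_vec m"
  by (intro finsum_vec_closed) auto

lemma index_finsum_vec_smult:
  assumes "finite T" "T \<subseteq> carrier_vec m" "i < m"
  shows "finsum_vec TYPE(real) m (\<lambda>x. a x \<cdot>\<^sub>v x) T $ i = (\<Sum>t\<in>T. a t * t $ i)"
proof -
  have "finsum_vec TYPE(real) m (\<lambda>x. a x \<cdot>\<^sub>v x) T $ i = (\<Sum>t\<in>T. (a t \<cdot>\<^sub>v t) $ i)"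
    using assms by (intro index_finsum_vec) auto
  also have "\<dots> = (\<Sum>t\<in>T. a t * t $ i)"
    using assms by (intro sum.cong) auto
  finally show ?thesis .
qed

lemma sum_if_mem_mult:
  assumes "finite T" "A \<subseteq> T"
  shows "(\<Sum>t\<in>T. (if t \<in> A then f t else 0) * g t) = (\<Sum>t\<in>A. f t * (g t :: real))"
proof -
  have "(\<Sum>t\<in>T. (if t \<in> A then f t else 0) * g t) = (\<Sum>t\<in>T. if t \<in> A then f t * g t else 0)"
    by (intro sum.cong) auto
  also have "\<dots> = (\<Sum>t\<in>A. f t * g t)"
    using assms by (simp add: sum.inter_restrict[symmetric] Int_absorb1)
  finally show ?thesis .
qed

lemma mem_aff_hull_vec_iff:
  assumes S: "S \<subseteq> carrier_vec m"
  shows "x \<in> aff_hull_vec m S \<longleftrightarrow>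
    (\<exists>T a. finite T \<and> T \<subseteq> S \<and> T \<noteq> {} \<and> sum a T = 1 \<and> x \<in> carrier_vec m \<and>
       (\<forall>i<m. x $ i = (\<Sum>t\<in>T. a t * t $ i)))"
proof
  assume "x \<in> aff_hull_vec m S"
  then obtain T a where T: "finite T" "T \<subseteq> S" "T \<noteq> {}" "sum a T = 1"
    and x: "x = finsum_vec TYPE(real) m (\<lambda>x. a x \<cdot>\<^sub>v x) T"
    unfolding aff_hull_vec_def by auto
  moreover have "T \<subseteq> carrier_vec m" using T S by auto
  then have "x \<in> carrier_vec m" "\<forall>i<m. x $ i = (\<Sum>t\<in>T. a t * t $ i)"
    unfolding x using finsum_vec_smult_carrier index_finsum_vec_smult T(1) by auto
  ultimately show "\<exists>T a. finite T \<and> T \<subseteq> S \<and> T \<noteq> {} \<and> sum a T = 1 \<and> x \<in> carrier_vec m \<and>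
       (\<forall>i<m. x $ i = (\<Sum>t\<in>T. a t * t $ i))"
    by blast
next
  assume "\<exists>T a. finite T \<and> T \<subseteq> S \<and> T \<noteq> {} \<and> sum a T = 1 \<and> x \<in> carrier_vec m \<and>
       (\<forall>i<m. x $ i = (\<Sum>t\<in>T. a t * t $ i))"
  then obtain T a where T: "finite T" "T \<subseteq> S" "T \<noteq> {}" "sum a T = 1"
    and x: "x \<in> carrier_vec m" "\<forall>i<m. x $ i = (\<Sum>t\<in>T. a t * t $ i)"
    by blast
  have T_carrier: "T \<subseteq> carrier_vec m" using T S by auto
  have sum_carrier: "finsum_vec TYPE(real) m (\<lambda>x. a x \<cdot>\<^sub>v x) T \<in> carrier_vec m"
    by (rule finsum_vec_smult_carrier[OF T(1) T_carrier])
  have "x = finsum_vec TYPE(real) m (\<lambda>x. a x \<cdot>\<^sub>v x) T"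
  proof (rule eq_vecI)
    fix i assume "i < dim_vec (finsum_vec TYPE(real) m (\<lambda>x. a x \<cdot>\<^sub>v x) T)"
    then have "i < m" using sum_carrier by simp
    then show "x $ i = finsum_vec TYPE(real) m (\<lambda>x. a x \<cdot>\<^sub>v x) T $ i"
      using x(2) index_finsum_vec_smult[OF T(1) T_carrier] by simp
  qed (use sum_carrier x(1) in simp)
  with T show "x \<in> aff_hull_vec m S" unfolding aff_hull_vec_def by (intro CollectI exI conjI)
qed

lemma aff_hull_vec_carrier: "S \<subseteq> carrier_vec m \<Longrightarrow> aff_hull_vec m S \<subseteq> carrier_vec m"
  using mem_aff_hull_vec_iff by blast

lemma subset_aff_hull_vec:
  assumes S: "S \<subseteq> carrier_vec m"
  shows "S \<subseteq> aff_hull_vec m S"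
proof
  fix s assume "s \<in> S"
  with S show "s \<in> aff_hull_vec m S"
    unfolding mem_aff_hull_vec_iff[OF S] by (intro exI[of _ "{s}"] exI[of _ "\<lambda>_. 1"]) auto
qed

lemma aff_hull_vec_singleton:
  assumes s: "s \<in> carrier_vec m"
  shows "aff_hull_vec m {s} = {s}"
proof
  show "{s} \<subseteq> aff_hull_vec m {s}" using s by (intro subset_aff_hull_vec) simp
  show "aff_hull_vec m {s} \<subseteq> {s}"
  proof
    fix x assume x_hull: "x \<in> aff_hull_vec m {s}"
    have "{s} \<subseteq> carrier_vec m" using s by simp
    from mem_aff_hull_vec_iff[THEN iffD1, OF this x_hull]
    obtain T a where T: "T \<subseteq> {s}" "T \<noteq> {}" "sum a T = 1"
      and x: "x \<in> carrier_vec m" "\<forall>i<m. x $ i = (\<Sum>t\<in>T. a t * t $ i)"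
      by (elim exE conjE)
    from T have T_eq: "T = {s}" by auto
    with T have "a s = 1" by simp
    with x s T_eq have "x = s" by (intro eq_vecI) auto
    then show "x \<in> {s}" by simp
  qed
qed

text \<open>Pad the three coefficient functions by zero to a common support.\<close>

lemma aff_hull_vec_add_smult_diff:
  assumes S: "S \<subseteq> carrier_vec m" and x: "x \<in> aff_hull_vec m S"
    and y: "y \<in> aff_hull_vec m S" and z: "z \<in> aff_hull_vec m S"
  shows "x + r \<cdot>\<^sub>v (y - z) \<in> aff_hull_vec m S"
proof -
  obtain Tx ax where Tx: "finite Tx" "Tx \<subseteq> S" "Tx \<noteq> {}" "sum ax Tx = 1"
    and x': "x \<in> carrier_vec m" "\<forall>i<m. x $ i = (\<Sum>t\<in>Tx. ax t * t $ i)"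
    using x unfolding mem_aff_hull_vec_iff[OF S] by blast
  obtain Ty ay where Ty: "finite Ty" "Ty \<subseteq> S" "sum ay Ty = 1"
    and y': "y \<in> carrier_vec m" "\<forall>i<m. y $ i = (\<Sum>t\<in>Ty. ay t * t $ i)"
    using y unfolding mem_aff_hull_vec_iff[OF S] by blast
  obtain Tz az where Tz: "finite Tz" "Tz \<subseteq> S" "sum az Tz = 1"
    and z': "z \<in> carrier_vec m" "\<forall>i<m. z $ i = (\<Sum>t\<in>Tz. az t * t $ i)"
    using z unfolding mem_aff_hull_vec_iff[OF S] by blast
  define T where "T = Tx \<union> Ty \<union> Tz"
  define pad where "pad f A t = (if t \<in> A then f t else 0)"
    for f :: "real vec \<Rightarrow> real" and A :: "real vec set" and t
  define a where "a t = pad ax Tx t + r * pad ay Ty t - r * pad az Tz t" for t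
  have T: "finite T" "T \<subseteq> S" "T \<noteq> {}" using Tx Ty Tz unfolding T_def by auto
  have sum_pad: "(\<Sum>t\<in>T. pad f A t * g t) = (\<Sum>t\<in>A. f t * g t)"
    if "A \<subseteq> T" for f A and g :: "real vec \<Rightarrow> real"
    unfolding pad_def using sum_if_mem_mult[OF T(1) that] .
  have sum_a: "(\<Sum>t\<in>T. a t * g t) =
      (\<Sum>t\<in>Tx. ax t * g t) + r * (\<Sum>t\<in>Ty. ay t * g t) - r * (\<Sum>t\<in>Tz. az t * g t)"
    for g :: "real vec \<Rightarrow> real"
  proof -
    have "(\<Sum>t\<in>T. a t * g t) = (\<Sum>t\<in>T. pad ax Tx t * g t) + r * (\<Sum>t\<in>T. pad ay Ty t * g t)
        - r * (\<Sum>t\<in>T. pad az Tz t * g t)"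
      unfolding a_def sum_subtractf[symmetric] sum.distrib[symmetric] sum_distrib_left
      by (intro sum.cong) (simp_all add: algebra_simps)
    moreover have "Tx \<subseteq> T" "Ty \<subseteq> T" "Tz \<subseteq> T" unfolding T_def by auto
    ultimately show ?thesis by (simp add: sum_pad)
  qed
  have "sum a T = 1" using sum_a[of "\<lambda>_. 1"] Tx(4) Ty(3) Tz(3) by simp
  moreover have "(x + r \<cdot>\<^sub>v (y - z)) $ i = (\<Sum>t\<in>T. a t * t $ i)" if "i < m" for i
  proof -
    have "(x + r \<cdot>\<^sub>v (y - z)) $ i = x $ i + r * y $ i - r * z $ i"
      using that x'(1) y'(1) z'(1) by (simp add: right_diff_distrib)
    then show ?thesis using that x'(2) y'(2) z'(2) sum_a[of "\<lambda>t. t $ i"] by simp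
  qed
  moreover have "x + r \<cdot>\<^sub>v (y - z) \<in> carrier_vec m" using x'(1) y'(1) z'(1) by simp
  ultimately show ?thesis
    unfolding mem_aff_hull_vec_iff[OF S] using T by (intro exI[of _ T] exI[of _ a]) auto
qed

lemma subspace_aff_hull_vec_diffs:
  assumes S: "S \<subseteq> carrier_vec m" and ne: "S \<noteq> {}"
  shows "subspace class_ring {x - y | x y. x \<in> aff_hull_vec m S \<and> y \<in> aff_hull_vec m S}
    (module_vec TYPE(real) m)"
proof -
  let ?H = "aff_hull_vec m S"
  have H: "?H \<subseteq> carrier_vec m" by (rule aff_hull_vec_carrier[OF S])
  obtain s where "s \<in> S" using ne by auto
  then have s: "s \<in> ?H" using subset_aff_hull_vec[OF S] by auto
  show ?thesis
  proof (rule subspace_vecI)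
    show "{x - y | x y. x \<in> ?H \<and> y \<in> ?H} \<subseteq> carrier_vec m"
      using H minus_carrier_vec by blast
    have "0\<^sub>v m = s - s" using s H by auto
    then show "0\<^sub>v m \<in> {x - y | x y. x \<in> ?H \<and> y \<in> ?H}" using s by blast
  next
    fix a b assume "a \<in> {x - y | x y. x \<in> ?H \<and> y \<in> ?H}" "b \<in> {x - y | x y. x \<in> ?H \<and> y \<in> ?H}"
    then obtain x y x' y' where xy: "x \<in> ?H" "y \<in> ?H" "x' \<in> ?H" "y' \<in> ?H"
      and ab: "a = x - y" "b = x' - y'" by auto
    have "x \<in> carrier_vec m" "y \<in> carrier_vec m" "x' \<in> carrier_vec m" "y' \<in> carrier_vec m"
      using xy H by auto
    then have "a + b = (x + 1 \<cdot>\<^sub>v (x' - y')) - y" unfolding ab by (intro eq_vecI) auto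
    moreover have "x + 1 \<cdot>\<^sub>v (x' - y') \<in> ?H" using aff_hull_vec_add_smult_diff[OF S xy(1,3,4)] .
    ultimately show "a + b \<in> {x - y | x y. x \<in> ?H \<and> y \<in> ?H}" using xy by blast
  next
    fix r a assume "a \<in> {x - y | x y. x \<in> ?H \<and> y \<in> ?H}"
    then obtain x y where xy: "x \<in> ?H" "y \<in> ?H" and a: "a = x - y" by auto
    have "x \<in> carrier_vec m" "y \<in> carrier_vec m" using xy H by auto
    then have "r \<cdot>\<^sub>v a = (y + r \<cdot>\<^sub>v (x - y)) - y"
      unfolding a by (intro eq_vecI) (auto simp: algebra_simps)
    moreover have "y + r \<cdot>\<^sub>v (x - y) \<in> ?H" using aff_hull_vec_add_smult_diff[OF S xy(2,1,2)] .
    ultimately show "r \<cdot>\<^sub>v a \<in> {x - y | x y. x \<in> ?H \<and> y \<in> ?H}" using xy by blast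
  qed
qed

lemma aff_dim_vec_eq_0_iff:
  assumes S: "S \<subseteq> carrier_vec m" and ne: "S \<noteq> {}"
  shows "aff_dim_vec m S = 0 \<longleftrightarrow> (\<exists>s. S = {s})"
proof -
  let ?H = "aff_hull_vec m S"
  let ?D = "{x - y | x y. x \<in> ?H \<and> y \<in> ?H}"
  have H: "?H \<subseteq> carrier_vec m" by (rule aff_hull_vec_carrier[OF S])
  have "aff_dim_vec m S = 0 \<longleftrightarrow> ?D = {0\<^sub>v m}"
    unfolding aff_dim_vec_def using ne subspace_dim_eq_0_iff[OF subspace_aff_hull_vec_diffs[OF S ne]]
    by simp
  also have "\<dots> \<longleftrightarrow> (\<exists>s. S = {s})"
  proof
    assume D: "?D = {0\<^sub>v m}"
    have "s1 = s2" if "s1 \<in> S" "s2 \<in> S" for s1 s2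
    proof -
      have "s1 \<in> ?H" "s2 \<in> ?H" using that subset_aff_hull_vec[OF S] by auto
      then have "s1 - s2 = 0\<^sub>v m" using D by blast
      then show ?thesis using vec_eq_if_diff_eq_0 that S by blast
    qed
    then show "\<exists>s. S = {s}" using ne by blast
  next
    assume "\<exists>s. S = {s}"
    then obtain s where S_eq: "S = {s}" by blast
    then have "s \<in> carrier_vec m" using S by auto
    then show "?D = {0\<^sub>v m}" unfolding S_eq aff_hull_vec_singleton[OF \<open>s \<in> carrier_vec m\<close>] by auto
  qed
  finally show ?thesis .
qed

section \<open>The parametrisation of \<open>Z\<^sub>c\<close>\<close>

lemma ex1_pair_image_iff:
  assumes inj: "inj_on (\<lambda>(a, b). f a b) (A \<times> B)"
  shows "(\<exists>!x. x \<in> {f a b | a b. a \<in> A \<and> b \<in> B}) \<longleftrightarrow> (\<exists>a. A = {a}) \<and> (\<exists>b. B = {b})"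
proof
  assume "\<exists>!x. x \<in> {f a b | a b. a \<in> A \<and> b \<in> B}"
  then obtain a0 b0 where ab0: "a0 \<in> A" "b0 \<in> B"
    and unique: "\<And>a b. a \<in> A \<Longrightarrow> b \<in> B \<Longrightarrow> f a b = f a0 b0"
    by blast
  have "a = a0 \<and> b = b0" if "a \<in> A" "b \<in> B" for a b
    using inj_onD[OF inj, of "(a, b)" "(a0, b0)"] unique[OF that] that ab0 by auto
  then show "(\<exists>a. A = {a}) \<and> (\<exists>b. B = {b})" using ab0 by blast
next
  assume "(\<exists>a. A = {a}) \<and> (\<exists>b. B = {b})"
  then show "\<exists>!x. x \<in> {f a b | a b. a \<in> A \<and> b \<in> B}" by auto
qed

lemma Collect_pair_cong:
  "(\<And>a b. a \<in> A \<Longrightarrow> b \<in> B \<Longrightarrow> f a b = g a b) \<Longrightarrow>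
    {f a b | a b. a \<in> A \<and> b \<in> B} = {g a b | a b. a \<in> A \<and> b \<in> B}"
  by (intro Collect_cong iffI) (metis, metis)

context
  fixes n :: nat and B Ms :: "real mat" and c :: "real vec" and ms :: "nat list"
    and Cs :: "nat \<Rightarrow> real vec set"
  assumes B: "B \<in> carrier_mat n (sum_list ms)"
    and c: "c \<in> pos_vecs (sum_list ms)"
    and ms_pos: "\<forall>i<length ms. ms ! i > 0"
    and Cs: "\<forall>i<length ms. Cs i \<subseteq> pos_vecs (ms ! i) \<and> is_cone (Cs i)"
    and Ms: "Ms \<in> carrier_mat (sum_list ms - length ms) n"
    and left_inv: "Ms * Mmat B ms = 1\<^sub>m (sum_list ms - length ms)"
begin

private abbreviation (input) "m \<equiv> sum_list ms"
private abbreviation (input) "k \<equiv> sum_list ms - length ms"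

private lemma I_carrier: "Imat ms \<in> carrier_mat m k"
  using Imat_carrier[OF ms_pos] .

private lemma M_carrier: "Mmat B ms \<in> carrier_mat n k"
  unfolding Mmat_def using B I_carrier by simp

private lemma Mt_carrier: "transpose_mat (Mmat B ms) \<in> carrier_mat k n"
  using M_carrier by simp

private lemma Et_carrier: "transpose_mat (Imat ms * Ms) \<in> carrier_mat n m"
  using mult_carrier_mat[OF I_carrier Ms] by simp

private lemma Pset_carrier: "y \<in> Pset ms Cs \<Longrightarrow> y \<in> carrier_vec m"
  using Pset_subset_pos_vecs[of ms Cs] Cs by (auto dest!: pos_vecs_carrier)

private lemma log_diff_carrier: "y \<in> Pset ms Cs \<Longrightarrow> lnv y - lnv c \<in> carrier_vec m"
  using Pset_carrier pos_vecs_carrier[OF c] by simp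

private lemma transpose_Imat_log_eq_0_iff:
  assumes u: "u \<in> carrier_vec n" and y: "y \<in> carrier_vec m"
  shows "transpose_mat (Imat ms) *\<^sub>v (lnv c + transpose_mat B *\<^sub>v u - lnv y) = 0\<^sub>v k \<longleftrightarrow>
    transpose_mat (Mmat B ms) *\<^sub>v u = transpose_mat (Imat ms) *\<^sub>v (lnv y - lnv c)"
proof -
  let ?It = "transpose_mat (Imat ms)"
  have It: "?It \<in> carrier_mat k m" using I_carrier by simp
  have c': "lnv c \<in> carrier_vec m" using pos_vecs_carrier[OF c] by simp
  have Bu: "transpose_mat B *\<^sub>v u \<in> carrier_vec m" using B u by simp
  have "lnv c + transpose_mat B *\<^sub>v u - lnv y = transpose_mat B *\<^sub>v u - (lnv y - lnv c)"
    using B c' Bu y pos_vecs_carrier[OF c] by (intro eq_vecI) auto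
  then have "?It *\<^sub>v (lnv c + transpose_mat B *\<^sub>v u - lnv y) =
      ?It *\<^sub>v (transpose_mat B *\<^sub>v u) - ?It *\<^sub>v (lnv y - lnv c)"
    using It Bu c' y by (simp add: mult_minus_distrib_mat_vec)
  also have "?It *\<^sub>v (transpose_mat B *\<^sub>v u) = transpose_mat (Mmat B ms) *\<^sub>v u"
    unfolding Mmat_def transpose_mult[OF B I_carrier] using It B u by simp
  finally show ?thesis
    using It M_carrier u c' y by (auto intro: vec_eq_if_diff_eq_0[of _ k])
qed

private lemma transpose_E_mult_vec:
  "w \<in> carrier_vec m \<Longrightarrow>
    transpose_mat (Imat ms * Ms) *\<^sub>v w = transpose_mat Ms *\<^sub>v (transpose_mat (Imat ms) *\<^sub>v w)"
  using transpose_mult[OF I_carrier Ms] I_carrier Ms by simp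

private lemma block_const_log_iff:
  assumes u: "u \<in> carrier_vec n" and y: "y \<in> Pset ms Cs"
  shows "block_const ms (lnv c + transpose_mat B *\<^sub>v u - lnv y) \<longleftrightarrow>
    (\<exists>v\<in>mat_kernel (transpose_mat (Mmat B ms)).
       u = transpose_mat (Imat ms * Ms) *\<^sub>v (lnv y - lnv c) + v)"
proof -
  have w: "lnv y - lnv c \<in> carrier_vec m" by (rule log_diff_carrier[OF y])
  then have b: "transpose_mat (Imat ms) *\<^sub>v (lnv y - lnv c) \<in> carrier_vec k"
    using I_carrier by simp
  have "lnv c + transpose_mat B *\<^sub>v u - lnv y \<in> carrier_vec m"
    using B u Pset_carrier[OF y] pos_vecs_carrier[OF c] by simp
  from transpose_Imat_mult_vec_eq_0_iff[OF this ms_pos, symmetric]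
  have "block_const ms (lnv c + transpose_mat B *\<^sub>v u - lnv y) \<longleftrightarrow>
      transpose_mat (Mmat B ms) *\<^sub>v u = transpose_mat (Imat ms) *\<^sub>v (lnv y - lnv c)"
    unfolding transpose_Imat_log_eq_0_iff[OF u Pset_carrier[OF y]] .
  also have "\<dots> \<longleftrightarrow> (\<exists>v\<in>mat_kernel (transpose_mat (Mmat B ms)).
      u = transpose_mat Ms *\<^sub>v (transpose_mat (Imat ms) *\<^sub>v (lnv y - lnv c)) + v)"
    by (rule transpose_mult_vec_eq_iff[OF M_carrier Ms left_inv u b])
  finally show ?thesis unfolding transpose_E_mult_vec[OF w] .
qed

private lemma mem_Zset_iff:
  assumes x: "x \<in> pos_vecs n"
  shows "x \<in> Zset n B c ms Cs \<longleftrightarrow>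
    (\<exists>y\<in>Pset ms Cs. \<exists>v\<in>mat_kernel (transpose_mat (Mmat B ms)).
       lnv x = transpose_mat (Imat ms * Ms) *\<^sub>v (lnv y - lnv c) + v)"
proof -
  have u: "lnv x \<in> carrier_vec n" using pos_vecs_carrier[OF x] by simp
  have "x \<in> Zset n B c ms Cs \<longleftrightarrow> vexp (lnv c + transpose_mat B *\<^sub>v lnv x) \<in> prod_set ms Cs"
    unfolding Zset_def using x had_vpow_eq_vexp[OF c x B] by simp
  also have "\<dots> \<longleftrightarrow>
      (\<exists>y\<in>Pset ms Cs. block_const ms (lnv c + transpose_mat B *\<^sub>v lnv x - lnv y))"
    using B u pos_vecs_carrier[OF c]
    by (simp add: prod_set_iff_block_const[OF Cs ms_pos] vexp_pos_vecs)
  also have "\<dots> \<longleftrightarrow> (\<exists>y\<in>Pset ms Cs. \<exists>v\<in>mat_kernel (transpose_mat (Mmat B ms)).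
       lnv x = transpose_mat (Imat ms * Ms) *\<^sub>v (lnv y - lnv c) + v)"
    by (rule bex_cong[OF refl]) (rule block_const_log_iff[OF u])
  finally show ?thesis .
qed

lemma Zset_eq_vexp_image:
  "Zset n B c ms Cs = {vexp (transpose_mat (Imat ms * Ms) *\<^sub>v (lnv y - lnv c) + v) | y v.
     y \<in> Pset ms Cs \<and> v \<in> mat_kernel (transpose_mat (Mmat B ms))}"
proof (intro equalityI subsetI)
  fix x assume x: "x \<in> Zset n B c ms Cs"
  then have x_pos: "x \<in> pos_vecs n" unfolding Zset_def by simp
  with x obtain y v where "y \<in> Pset ms Cs" "v \<in> mat_kernel (transpose_mat (Mmat B ms))"
    and "lnv x = transpose_mat (Imat ms * Ms) *\<^sub>v (lnv y - lnv c) + v"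
    using mem_Zset_iff by blast
  moreover have "x = vexp (lnv x)" using vexp_lnv[OF x_pos] by simp
  ultimately show "x \<in> {vexp (transpose_mat (Imat ms * Ms) *\<^sub>v (lnv y - lnv c) + v) | y v.
      y \<in> Pset ms Cs \<and> v \<in> mat_kernel (transpose_mat (Mmat B ms))}"
    by (intro CollectI exI conjI) auto
next
  fix x assume "x \<in> {vexp (transpose_mat (Imat ms * Ms) *\<^sub>v (lnv y - lnv c) + v) | y v.
      y \<in> Pset ms Cs \<and> v \<in> mat_kernel (transpose_mat (Mmat B ms))}"
  then obtain y v where y: "y \<in> Pset ms Cs" and v: "v \<in> mat_kernel (transpose_mat (Mmat B ms))"
    and x: "x = vexp (transpose_mat (Imat ms * Ms) *\<^sub>v (lnv y - lnv c) + v)" by blast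
  have "transpose_mat (Imat ms * Ms) *\<^sub>v (lnv y - lnv c) + v \<in> carrier_vec n"
    using Et_carrier mat_kernelD(1)[OF Mt_carrier v] log_diff_carrier[OF y] by simp
  then have x_pos: "x \<in> pos_vecs n" unfolding x by (rule vexp_pos_vecs)
  have "lnv x = transpose_mat (Imat ms * Ms) *\<^sub>v (lnv y - lnv c) + v" unfolding x by simp
  with y v show "x \<in> Zset n B c ms Cs" by (intro mem_Zset_iff[OF x_pos, THEN iffD2]) blast
qed

private lemma Mt_log_parametrisation:
  assumes y: "y \<in> Pset ms Cs" and v: "v \<in> mat_kernel (transpose_mat (Mmat B ms))"
  shows "transpose_mat (Mmat B ms) *\<^sub>v (transpose_mat (Imat ms * Ms) *\<^sub>v (lnv y - lnv c) + v) =
    transpose_mat (Imat ms) *\<^sub>v (lnv y - lnv c)"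
proof -
  have b: "transpose_mat (Imat ms) *\<^sub>v (lnv y - lnv c) \<in> carrier_vec k"
    using I_carrier log_diff_carrier[OF y] by simp
  have u: "transpose_mat (Imat ms * Ms) *\<^sub>v (lnv y - lnv c) + v \<in> carrier_vec n"
    using Et_carrier mat_kernelD(1)[OF Mt_carrier v] log_diff_carrier[OF y] by simp
  from transpose_E_mult_vec[OF log_diff_carrier[OF y]] show ?thesis
    unfolding transpose_mult_vec_eq_iff[OF M_carrier Ms left_inv u b] using v
    by (intro bexI[of _ v]) simp_all
qed

lemma log_parametrisation_inj:
  assumes y1: "y1 \<in> Pset ms Cs" and y2: "y2 \<in> Pset ms Cs"
    and v1: "v1 \<in> mat_kernel (transpose_mat (Mmat B ms))"
    and v2: "v2 \<in> mat_kernel (transpose_mat (Mmat B ms))"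
    and eq: "transpose_mat (Imat ms * Ms) *\<^sub>v (lnv y1 - lnv c) + v1 =
      transpose_mat (Imat ms * Ms) *\<^sub>v (lnv y2 - lnv c) + v2"
  shows "y1 = y2 \<and> v1 = v2"
proof -
  let ?It = "transpose_mat (Imat ms)"
  have It: "?It \<in> carrier_mat k m" using I_carrier by simp
  have carriers: "y1 \<in> carrier_vec m" "y2 \<in> carrier_vec m" "c \<in> carrier_vec m"
    using Pset_carrier[OF y1] Pset_carrier[OF y2] pos_vecs_carrier[OF c] by auto
  have "?It *\<^sub>v (lnv y1 - lnv c) = ?It *\<^sub>v (lnv y2 - lnv c)"
    using Mt_log_parametrisation[OF y1 v1] Mt_log_parametrisation[OF y2 v2] eq by simp
  moreover have "lnv y1 - lnv y2 = (lnv y1 - lnv c) - (lnv y2 - lnv c)"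
    using carriers by (intro eq_vecI) auto
  ultimately have "?It *\<^sub>v (lnv y1 - lnv y2) = 0\<^sub>v k"
    using It carriers by (simp add: mult_minus_distrib_mat_vec)
  then have "block_const ms (lnv y1 - lnv y2)"
    using transpose_Imat_mult_vec_eq_0_iff[OF _ ms_pos] carriers by simp
  moreover have "\<forall>i<length ms. Cs i \<subseteq> pos_vecs (ms ! i)" using Cs by simp
  ultimately have y_eq: "y1 = y2" using Pset_eq_if_block_const y1 y2 by blast
  let ?a = "transpose_mat (Imat ms * Ms) *\<^sub>v (lnv y1 - lnv c)"
  have a: "?a \<in> carrier_vec n" using Et_carrier log_diff_carrier[OF y1] by simp
  have v1': "v1 \<in> carrier_vec n" and v2': "v2 \<in> carrier_vec n"
    using mat_kernelD(1)[OF Mt_carrier] v1 v2 by auto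
  have "v1 = v2"
  proof (rule eq_vecI)
    fix i assume "i < dim_vec v2"
    then have i: "i < n" using v2' by simp
    have "(?a + v1) $ i = (?a + v2) $ i" using eq unfolding y_eq by simp
    then show "v1 $ i = v2 $ i" using i a v1' v2' by simp
  qed (use v1' v2' in simp)
  with y_eq show ?thesis by simp
qed

lemma inj_on_vexp_log_parametrisation:
  "inj_on (\<lambda>(y, v). vexp (transpose_mat (Imat ms * Ms) *\<^sub>v (lnv y - lnv c) + v))
     (Pset ms Cs \<times> mat_kernel (transpose_mat (Mmat B ms)))"
proof (rule inj_onI)
  fix p q assume "p \<in> Pset ms Cs \<times> mat_kernel (transpose_mat (Mmat B ms))"
    and "q \<in> Pset ms Cs \<times> mat_kernel (transpose_mat (Mmat B ms))"
  then obtain y1 v1 y2 v2 where pq: "p = (y1, v1)" "q = (y2, v2)"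
    and y: "y1 \<in> Pset ms Cs" "y2 \<in> Pset ms Cs"
    and v: "v1 \<in> mat_kernel (transpose_mat (Mmat B ms))" "v2 \<in> mat_kernel (transpose_mat (Mmat B ms))"
    by blast
  assume "(\<lambda>(y, v). vexp (transpose_mat (Imat ms * Ms) *\<^sub>v (lnv y - lnv c) + v)) p =
    (\<lambda>(y, v). vexp (transpose_mat (Imat ms * Ms) *\<^sub>v (lnv y - lnv c) + v)) q"
  then have "lnv (vexp (transpose_mat (Imat ms * Ms) *\<^sub>v (lnv y1 - lnv c) + v1)) =
      lnv (vexp (transpose_mat (Imat ms * Ms) *\<^sub>v (lnv y2 - lnv c) + v2))"
    unfolding pq by simp
  then show "p = q" unfolding pq using log_parametrisation_inj[OF y v] by simp
qed

lemma Zset_eq_parametrisation: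
  "Zset n B c ms Cs = {had (vpow (had y (vinv c)) (Imat ms * Ms)) (vexp v) | y v.
     y \<in> Pset ms Cs \<and> v \<in> orth_compl n (Lspace B ms)}"
proof -
  have L_perp: "orth_compl n (Lspace B ms) = mat_kernel (transpose_mat (Mmat B ms))"
    unfolding Lspace_def by (rule orth_compl_mat_image_eq_mat_kernel[OF M_carrier])
  have "had (vpow (had y (vinv c)) (Imat ms * Ms)) (vexp v) =
      vexp (transpose_mat (Imat ms * Ms) *\<^sub>v (lnv y - lnv c) + v)"
    if "y \<in> Pset ms Cs" "v \<in> mat_kernel (transpose_mat (Mmat B ms))" for y v
    using Pset_subset_pos_vecs[of ms Cs] Cs that mult_carrier_mat[OF I_carrier Ms]
      mat_kernelD(1)[OF Mt_carrier] c
    by (intro had_vpow_had_vinv_eq_vexp) auto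
  then show ?thesis unfolding Zset_eq_vexp_image L_perp by (rule Collect_pair_cong[symmetric])
qed

lemma Zset_ne:
  assumes "prod_set ms Cs \<noteq> {}"
  shows "Zset n B c ms Cs \<noteq> {}"
proof -
  obtain y where "y \<in> Pset ms Cs" using Pset_ne[OF Cs ms_pos assms] by blast
  moreover have "0\<^sub>v n \<in> mat_kernel (transpose_mat (Mmat B ms))"
    using Mt_carrier by (intro mat_kernelI) auto
  ultimately have "vexp (transpose_mat (Imat ms * Ms) *\<^sub>v (lnv y - lnv c) + 0\<^sub>v n)
      \<in> Zset n B c ms Cs"
    unfolding Zset_eq_vexp_image by (intro CollectI exI conjI) simp_all
  then show ?thesis by blast
qed

lemma ex1_Zset_iff:
  assumes "prod_set ms Cs \<noteq> {}"
  shows "(\<exists>!x. x \<in> Zset n B c ms Cs) \<longleftrightarrow>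
    aff_dim_vec m (Pset ms Cs) = 0 \<and> subspace_dim n (orth_compl n (Lspace B ms)) = 0"
proof -
  let ?K = "mat_kernel (transpose_mat (Mmat B ms))"
  from inj_on_vexp_log_parametrisation
  have "(\<exists>!x. x \<in> Zset n B c ms Cs) \<longleftrightarrow> (\<exists>y. Pset ms Cs = {y}) \<and> (\<exists>v. ?K = {v})"
    unfolding Zset_eq_vexp_image by (rule ex1_pair_image_iff)
  also have "(\<exists>y. Pset ms Cs = {y}) \<longleftrightarrow> aff_dim_vec m (Pset ms Cs) = 0"
  proof -
    have "Pset ms Cs \<subseteq> carrier_vec m" using Pset_carrier by blast
    moreover have "Pset ms Cs \<noteq> {}" by (rule Pset_ne[OF Cs ms_pos assms])
    ultimately show ?thesis using aff_dim_vec_eq_0_iff by simp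
  qed
  also have "(\<exists>v. ?K = {v}) \<longleftrightarrow> subspace_dim n (orth_compl n (Lspace B ms)) = 0"
  proof -
    have "0\<^sub>v n \<in> ?K" using Mt_carrier by (intro mat_kernelI) auto
    then have "(\<exists>v. ?K = {v}) \<longleftrightarrow> ?K = {0\<^sub>v n}" by auto
    also have "\<dots> \<longleftrightarrow> subspace_dim n ?K = 0"
      using subspace_dim_eq_0_iff[OF mat_kernel_subspace[OF Mt_carrier]] by simp
    finally show ?thesis
      unfolding Lspace_def orth_compl_mat_image_eq_mat_kernel[OF M_carrier] .
  qed
  finally show ?thesis .
qed

end

theorem corollary6:
  fixes n :: nat and B :: "real mat" and c :: "real vec" and ms :: "nat list"
    and Cs :: "nat \<Rightarrow> real vec set" and Mstar :: "real mat"
  assumes B: "B \<in> carrier_mat n (sum_list ms)"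
    and c: "c \<in> pos_vecs (sum_list ms)"
    and ms_pos: "\<forall>i<length ms. ms ! i > 0"
    and Cs: "\<forall>i<length ms. Cs i \<subseteq> pos_vecs (ms ! i) \<and> is_cone (Cs i)"
    and C_ne: "prod_set ms Cs \<noteq> {}"
    and Mstar: "Mstar \<in> carrier_mat (sum_list ms - length ms) n"
    and ginv: "Mmat B ms * Mstar * Mmat B ms = Mmat B ms"
    and d0: "kernel_dim (Mmat B ms) = 0"
  shows "Zset n B c ms Cs =
           {had (vpow (had y (vinv c)) (Imat ms * Mstar)) (vexp v) | y v.
              y \<in> Pset ms Cs \<and> v \<in> orth_compl n (Lspace B ms)}
         \<and> Zset n B c ms Cs \<noteq> {}
         \<and> ((\<exists>!x. x \<in> Zset n B c ms Cs) \<longleftrightarrow>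
              aff_dim_vec (sum_list ms) (Pset ms Cs) = 0 \<and>
              subspace_dim n (orth_compl n (Lspace B ms)) = 0)"
proof -
  have M: "Mmat B ms \<in> carrier_mat n (sum_list ms - length ms)"
    unfolding Mmat_def using B Imat_carrier[OF ms_pos] by simp
  have left_inv: "Mstar * Mmat B ms = 1\<^sub>m (sum_list ms - length ms)"
    using generalized_inverse_left_inverse[OF M Mstar ginv] kernel_dim_eq_0_iff[OF M] d0 by simp
  show ?thesis
    using Zset_eq_parametrisation[OF B c ms_pos Cs Mstar left_inv]
      Zset_ne[OF B c ms_pos Cs Mstar left_inv C_ne]
      ex1_Zset_iff[OF B c ms_pos Cs Mstar left_inv C_ne]
    by blast
qed

end
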